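(* Let $f\in C^1(\mathbb{R})$ satisfy (f1), $f_0\in(0,+\infty)$, $f_\infty=0$, $f'(s)<Nf(s)/s$ for all $s>0$ and $f'(s)>Nf(s)/s$ for all $s<0$. Then every negative solution $u$ of (MO) (for any $\lambda>0$) is stable; hence it is non-degenerate and has Morse index $M(u)=0$.
   Context: Let $N\ge1$ be an integer. For $\lambda\ge0$, problem (MO) is: find $u\in C^2[0,1]$ with $\left((u')^N\right)'=\lambda^N N r^{N-1}f(-u)$ in $(0,1)$, $u'(0)=u(1)=0$. Condition (f1): $f(s)s^N>0$ for $s\neq0$. $f_0^N=\lim_{s\to0}f(s)/s^N$, $f_\infty^N=\lim_{|s|\to\infty}f(s)/s^N$. For a solution $u$ of (MO), set $v=-u$; the linearized eigenvalue problem at $u$ is $\left(-\phi'(-v')^{N-1}\right)'-\lambda^N r^{N-1}f'(v)\phi=\frac{\mu}{N}\phi$ in $(0,1)$, $\phi'(0)=\phi(1)=0$. The solution $u$ is stable if all eigenvalues $\mu$ of this problem are positive, degenerate if $0$ is an eigenvalue, and its Morse index $M(u)$ is the number of negative eigenvalues. *)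

theory Defs
  imports "HOL-Analysis.Analysis"
begin

definition C2_on01 :: "(real \<Rightarrow> real) \<Rightarrow> (real \<Rightarrow> real) \<Rightarrow> bool" where
  "C2_on01 u u1 \<longleftrightarrow> (\<exists>u2. (\<forall>r\<in>{0..1}. (u has_real_derivative u1 r) (at r within {0..1})
       \<and> (u1 has_real_derivative u2 r) (at r within {0..1})) \<and> continuous_on {0..1} u2)"

definition MO_solution :: "nat \<Rightarrow> real \<Rightarrow> (real \<Rightarrow> real) \<Rightarrow> (real \<Rightarrow> real) \<Rightarrow> (real \<Rightarrow> real) \<Rightarrow> bool" where
  "MO_solution N lam f u u1 \<longleftrightarrow> C2_on01 u u1
     \<and> (\<forall>r\<in>{0<..<1}. ((\<lambda>t. (u1 t) ^ N) has_real_derivative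
            lam ^ N * real N * r ^ (N - 1) * f (- u r)) (at r))
     \<and> u1 0 = 0 \<and> u 1 = 0"

text \<open>mu is an eigenvalue of the linearized problem at u (v = -u, so -v' = u' = u1):
  (-phi' (-v')^(N-1))' - lambda^N r^(N-1) f'(v) phi = (mu/N) phi in (0,1),
  phi'(0) = phi(1) = 0, with a nontrivial eigenfunction phi in C^2[0,1].\<close>
definition lin_eigenvalue :: "nat \<Rightarrow> real \<Rightarrow> (real \<Rightarrow> real) \<Rightarrow> (real \<Rightarrow> real) \<Rightarrow> (real \<Rightarrow> real) \<Rightarrow> real \<Rightarrow> bool" where
  "lin_eigenvalue N lam f' u u1 mu \<longleftrightarrow> (\<exists>phi phi1.
     C2_on01 phi phi1 \<and> (\<exists>r\<in>{0..1}. phi r \<noteq> 0)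
     \<and> (\<forall>r\<in>{0<..<1}. \<exists>g. ((\<lambda>t. - phi1 t * (u1 t) ^ (N - 1)) has_real_derivative g) (at r)
            \<and> g - lam ^ N * r ^ (N - 1) * f' (- u r) * phi r = mu / real N * phi r)
     \<and> phi1 0 = 0 \<and> phi 1 = 0)"

definition stable_sol :: "nat \<Rightarrow> real \<Rightarrow> (real \<Rightarrow> real) \<Rightarrow> (real \<Rightarrow> real) \<Rightarrow> (real \<Rightarrow> real) \<Rightarrow> bool" where
  "stable_sol N lam f' u u1 \<longleftrightarrow> (\<forall>mu. lin_eigenvalue N lam f' u u1 mu \<longrightarrow> mu > 0)"

definition degenerate_sol :: "nat \<Rightarrow> real \<Rightarrow> (real \<Rightarrow> real) \<Rightarrow> (real \<Rightarrow> real) \<Rightarrow> (real \<Rightarrow> real) \<Rightarrow> bool" where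
  "degenerate_sol N lam f' u u1 \<longleftrightarrow> lin_eigenvalue N lam f' u u1 0"

definition morse_index :: "nat \<Rightarrow> real \<Rightarrow> (real \<Rightarrow> real) \<Rightarrow> (real \<Rightarrow> real) \<Rightarrow> (real \<Rightarrow> real) \<Rightarrow> nat" where
  "morse_index N lam f' u u1 = card {mu. lin_eigenvalue N lam f' u u1 mu \<and> mu < 0}"

end

theory Submission
  imports Defs
begin

(* Write u' = u1 > 0 and let phi be an eigenfunction. The Wronskian-type quantity
     W = (u1)^N phi - phi1 (u1)^(N-1) u
   satisfies, by the equation for u and the eigenvalue equation for phi,
     W' = phi K,   K(r) = (mu/N) u + lam^N r^(N-1) (N f(-u) - f'(-u) (-u)),
   and K > 0 on (0,1) whenever mu <= 0, because u < 0 and f'(s) < N f(s)/s for s > 0.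
   Take a nodal interval (a,b) of phi on which sgn(phi) is constant. Then sgn(phi) W increases
   strictly on [a,b], whereas the boundary conditions and the sign of phi' at the zeros of phi
   give sgn(phi) W(a) >= 0 >= sgn(phi) W(b), a contradiction. *)

lemma C2_on01_facts:
  assumes "C2_on01 u u1"
  shows "continuous_on {0..1} u" "continuous_on {0..1} u1"
    "\<And>r. r \<in> {0<..<1} \<Longrightarrow> (u has_real_derivative u1 r) (at r)"
proof -
  obtain u2 where d: "\<forall>r\<in>{0..1}. (u has_real_derivative u1 r) (at r within {0..1})
       \<and> (u1 has_real_derivative u2 r) (at r within {0..1})"
    using assms unfolding C2_on01_def by blast
  show "continuous_on {0..1} u" by (rule DERIV_continuous_on) (use d in blast)
  show "continuous_on {0..1} u1" by (rule DERIV_continuous_on) (use d in blast)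
  fix r :: real assume r: "r \<in> {0<..<1}"
  then have "(u has_real_derivative u1 r) (at r within {0..1})" using d by auto
  then show "(u has_real_derivative u1 r) (at r)"
    using r at_within_Icc_at[of 0 r 1] by auto
qed

lemma nonvanishing_keeps_sign:
  fixes g :: "real \<Rightarrow> real"
  assumes "connected S" "continuous_on S g" "\<And>x. x \<in> S \<Longrightarrow> g x \<noteq> 0"
    and "s \<in> S" "t \<in> S" "g s > 0"
  shows "g t > 0"
proof (rule ccontr)
  assume "\<not> g t > 0"
  have "connected (g ` S)" using connected_continuous_image assms(1,2) by blast
  moreover have "g t \<in> g ` S" "g s \<in> g ` S" using assms(4,5) by auto
  ultimately have "0 \<in> g ` S"
    using connectedD_interval \<open>\<not> g t > 0\<close> assms(6) by (metis less_eq_real_def not_less)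
  then show False using assms(3) by auto
qed

lemma deriv_nonneg_at_left_zero:
  fixes g :: "real \<Rightarrow> real"
  assumes "(g has_real_derivative D) (at a)" "g a = 0" "a < b"
    and "\<And>t. a < t \<Longrightarrow> t < b \<Longrightarrow> g t > 0"
  shows "D \<ge> 0"
proof -
  have "((\<lambda>t. (g t - g a) / (t - a)) \<longlongrightarrow> D) (at_right a)"
    using assms(1) has_field_derivative_iff has_field_derivative_at_within by blast
  moreover have "\<forall>\<^sub>F t in at_right a. (g t - g a) / (t - a) \<ge> 0"
    unfolding eventually_at_right[OF assms(3)] using assms(2-4)
    by (auto intro!: exI[of _ b] divide_nonneg_pos less_imp_le)
  ultimately show ?thesis by (rule tendsto_lowerbound) simp
qed

lemma deriv_nonpos_at_right_zero:
  fixes g :: "real \<Rightarrow> real"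
  assumes "(g has_real_derivative D) (at b)" "g b = 0" "a < b"
    and "\<And>t. a < t \<Longrightarrow> t < b \<Longrightarrow> g t > 0"
  shows "D \<le> 0"
proof -
  have "((\<lambda>t. g (- t)) has_real_derivative - D) (at (- b))"
    using assms(1) DERIV_mirror[where f = g and x = "- b" and y = D] by simp
  then have "- D \<ge> 0"
    by (rule deriv_nonneg_at_left_zero[where b = "- a"]) (use assms(2-4) in auto)
  then show ?thesis by simp
qed

lemma nodal_interval:
  fixes phi :: "real \<Rightarrow> real"
  assumes cont: "continuous_on {c..d} phi" and r0: "r0 \<in> {c..d}" "phi r0 \<noteq> 0"
    and zero_end: "phi d = 0"
  obtains a b where "c \<le> a" "a \<le> r0" "r0 < b" "b \<le> d" "a = c \<or> phi a = 0" "phi b = 0"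
    "\<And>t. a < t \<Longrightarrow> t < b \<Longrightarrow> sgn (phi r0) * phi t > 0"
proof -
  define Z where "Z = {t \<in> {c..d}. phi t = 0}"
  have "closed Z"
    unfolding Z_def by (rule continuous_closed_preimage_constant[OF cont]) simp
  define a where "a = Sup (insert c (Z \<inter> {..r0}))"
  define b where "b = Inf (Z \<inter> {r0..})"
  have a_mem: "a \<in> insert c (Z \<inter> {..r0})"
    unfolding a_def
    by (rule closed_contains_Sup) (use \<open>closed Z\<close> r0 in \<open>auto intro!: closed_insert\<close>)
  have a_upper: "t \<le> a" if "t \<in> Z" "t \<le> r0" for t
    unfolding a_def by (rule cSup_upper) (use that r0 in auto)
  have "d \<in> Z \<inter> {r0..}" using r0 zero_end by (auto simp: Z_def)
  then have b_mem: "b \<in> Z \<inter> {r0..}"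
    unfolding b_def by (intro closed_contains_Inf) (auto intro: \<open>closed Z\<close>)
  have b_lower: "b \<le> t" if "t \<in> Z" "r0 \<le> t" for t
    unfolding b_def by (rule cInf_lower) (use that in auto)
  have "c \<le> a" "a \<le> r0" using a_mem r0 by (auto simp: Z_def)
  have "r0 < b" "b \<le> d" "phi b = 0" using b_mem r0 by (auto simp: Z_def le_less)
  have nonzero: "phi x \<noteq> 0" if "a < x \<and> x < b \<or> x = r0" for x
    using that a_upper[of x] b_lower[of x] \<open>c \<le> a\<close> \<open>b \<le> d\<close> r0 by (force simp: Z_def)
  show thesis
  proof (rule that)
    show "a = c \<or> phi a = 0" using a_mem by (auto simp: Z_def)
    fix t assume t: "a < t" "t < b"
    show "sgn (phi r0) * phi t > 0"
    proof (rule nonvanishing_keeps_sign[of "{min t r0..max t r0}" "\<lambda>x. sgn (phi r0) * phi x" r0])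
      show "continuous_on {min t r0..max t r0} (\<lambda>t. sgn (phi r0) * phi t)"
        using \<open>c \<le> a\<close> \<open>b \<le> d\<close> t r0
        by (intro continuous_intros continuous_on_subset[OF cont]) (auto simp: min_def max_def)
      show "sgn (phi r0) * phi x \<noteq> 0" if "x \<in> {min t r0..max t r0}" for x
      proof -
        have "a < x \<and> x < b \<or> x = r0"
          using that t \<open>a \<le> r0\<close> \<open>r0 < b\<close> by (cases "t \<le> r0") auto
        then show ?thesis using nonzero[of x] r0(2) by (simp add: sgn_if)
      qed
      show "sgn (phi r0) * phi r0 > 0" using r0(2) by (simp add: sgn_if)
    qed auto
  qed fact+
qed

text \<open>A negative solution of (MO) is strictly increasing: u' > 0 on (0,1]. First ((u')^N)' > 0
  forces u' \<noteq> 0 on (0,1]; if u' were negative there, u would decrease from u 0 < 0 to u 1 = 0.\<close>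

lemma negative_solution_increasing:
  fixes N :: nat and f :: "real \<Rightarrow> real" and lam :: real and u u1 :: "real \<Rightarrow> real"
  assumes N: "N \<ge> 1"
    and f1: "\<And>s. s \<noteq> 0 \<Longrightarrow> f s * s ^ N > 0"
    and lam: "lam > 0"
    and sol: "MO_solution N lam f u u1"
    and negative: "\<forall>r\<in>{0..<1}. u r < 0"
  shows "\<And>r. r \<in> {0<..1} \<Longrightarrow> u1 r > 0"
proof -
  have C2u: "C2_on01 u u1" and u1_0: "u1 0 = 0" and u_1: "u 1 = 0"
    and deq: "\<And>r. r \<in> {0<..<1} \<Longrightarrow> ((\<lambda>t. u1 t ^ N) has_real_derivative
        lam ^ N * real N * r ^ (N - 1) * f (- u r)) (at r)"
    using sol unfolding MO_solution_def by auto
  note u_cont = C2_on01_facts(1)[OF C2u] and u1_cont = C2_on01_facts(2)[OF C2u]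
    and u_deriv = C2_on01_facts(3)[OF C2u]
  have f_pos: "f (- u r) > 0" if "r \<in> {0<..<1}" for r
  proof -
    have "- u r > 0" using negative that by simp
    then show ?thesis using f1[of "- u r"] by (simp add: zero_less_mult_iff)
  qed
  have u1_nonzero: "u1 r \<noteq> 0" if r: "r \<in> {0<..1}" for r
  proof -
    have "u1 0 ^ N < u1 r ^ N"
    proof (rule DERIV_pos_imp_increasing_open[where f = "\<lambda>t. u1 t ^ N"])
      show "continuous_on {0..r} (\<lambda>t. u1 t ^ N)"
        by (intro continuous_intros continuous_on_subset[OF u1_cont]) (use r in auto)
      show "\<exists>y. ((\<lambda>t. u1 t ^ N) has_real_derivative y) (at t) \<and> y > 0" if "0 < t" "t < r" for t
        using deq[of t] f_pos[of t] that r lam N by auto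
    qed (use r in auto)
    then show ?thesis using u1_0 N by auto
  qed
  show "u1 r > 0" if r: "r \<in> {0<..1}" for r
  proof (rule ccontr)
    assume "\<not> u1 r > 0"
    then have "- u1 r > 0" using u1_nonzero[OF r] by simp
    have u1_neg: "- u1 t > 0" if "t \<in> {0<..1}" for t
    proof (rule nonvanishing_keeps_sign[of "{0<..1}" "\<lambda>t. - u1 t" r t])
      show "continuous_on {0<..1} (\<lambda>t. - u1 t)"
        by (intro continuous_intros continuous_on_subset[OF u1_cont]) auto
    qed (use that r u1_nonzero \<open>- u1 r > 0\<close> in auto)
    have "- u 0 < - u 1"
    proof (rule DERIV_pos_imp_increasing_open[where f = "\<lambda>t. - u t"])
      show "continuous_on {0..1} (\<lambda>t. - u t)" using u_cont by (intro continuous_intros)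
      show "\<exists>y. ((\<lambda>t. - u t) has_real_derivative y) (at x) \<and> y > 0" if "0 < x" "x < 1" for x
        using DERIV_minus[OF u_deriv[of x]] u1_neg[of x] that by auto
    qed simp
    moreover have "u 0 < 0" using negative by simp
    ultimately show False using u_1 by simp
  qed
qed

definition wronskian :: "nat \<Rightarrow> (real \<Rightarrow> real) \<Rightarrow> (real \<Rightarrow> real) \<Rightarrow> (real \<Rightarrow> real)
    \<Rightarrow> (real \<Rightarrow> real) \<Rightarrow> real \<Rightarrow> real" where
  "wronskian N u u1 phi phi1 t = u1 t ^ N * phi t - phi1 t * u1 t ^ (N - 1) * u t"

text \<open>Pointwise derivative of the Wronskian: combining the equation for u with the
  eigenvalue equation for phi, all derivative terms of phi cancel and W' = phi K.\<close>

lemma wronskian_derivative: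
  fixes N :: nat and f f' u u1 phi phi1 :: "real \<Rightarrow> real" and lam mu g t :: real
  assumes N: "N \<ge> 1"
    and du: "(u has_real_derivative u1 t) (at t)"
    and dphi: "(phi has_real_derivative phi1 t) (at t)"
    and deq: "((\<lambda>s. u1 s ^ N) has_real_derivative lam ^ N * real N * t ^ (N - 1) * f (- u t)) (at t)"
    and dflux: "((\<lambda>s. - phi1 s * u1 s ^ (N - 1)) has_real_derivative g) (at t)"
    and eig: "g - lam ^ N * t ^ (N - 1) * f' (- u t) * phi t = mu / real N * phi t"
  shows "(wronskian N u u1 phi phi1 has_real_derivative
      phi t * (mu / real N * u t + lam ^ N * t ^ (N - 1) * (real N * f (- u t) - f' (- u t) * (- u t))))
      (at t)"
proof -
  have "(wronskian N u u1 phi phi1 has_real_derivative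
      lam ^ N * real N * t ^ (N - 1) * f (- u t) * phi t + phi1 t * u1 t ^ N
      + (g * u t + u1 t * (- phi1 t * u1 t ^ (N - 1)))) (at t)"
    unfolding wronskian_def[abs_def] diff_conv_add_uminus minus_mult_left
    by (rule DERIV_add[OF DERIV_mult[OF deq dphi] DERIV_mult[OF dflux du]])
  moreover have "u1 t * u1 t ^ (N - 1) = u1 t ^ N"
    using N by (metis Suc_diff_le diff_Suc_1 power_Suc)
  moreover have "g = mu / real N * phi t + lam ^ N * t ^ (N - 1) * f' (- u t) * phi t"
    using eig by linarith
  ultimately show ?thesis by (simp add: algebra_simps)
qed

text \<open>The coefficient K is positive when mu \<le> 0: here the hypothesis f'(s) < N f(s)/s for s > 0
  is used at s = -u(t) > 0.\<close>

lemma wronskian_factor_pos: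
  fixes N :: nat and f f' :: "real \<Rightarrow> real" and lam mu t s :: real
  assumes fpos: "\<And>s. s > 0 \<Longrightarrow> f' s < real N * f s / s"
    and lam: "lam > 0" and t: "t > 0" and s: "s > 0" and mu: "mu \<le> 0" and N: "N \<ge> 1"
  shows "mu / real N * (- s) + lam ^ N * t ^ (N - 1) * (real N * f s - f' s * s) > 0"
proof -
  have "real N * f s - f' s * s > 0" using fpos[OF s] s by (simp add: field_simps)
  moreover have "lam ^ N * t ^ (N - 1) > 0" using lam t by simp
  moreover have "mu / real N * (- s) \<ge> 0"
    using mult_nonpos_nonpos[OF divide_nonpos_pos[OF mu] less_imp_le[of "- s" 0]] N s by simp
  ultimately show ?thesis by (smt (verit) mult_pos_pos)
qed

lemma wronskian_derivative_eigen:
  fixes N :: nat and f f' u u1 phi phi1 :: "real \<Rightarrow> real" and lam mu t :: real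
  assumes N: "N \<ge> 1"
    and fpos: "\<And>s. s > 0 \<Longrightarrow> f' s < real N * f s / s"
    and lam: "lam > 0" and mu: "mu \<le> 0"
    and sol: "MO_solution N lam f u u1"
    and negative: "\<forall>r\<in>{0..<1}. u r < 0"
    and C2phi: "C2_on01 phi phi1"
    and eig: "\<forall>r\<in>{0<..<1}. \<exists>g. ((\<lambda>t. - phi1 t * (u1 t) ^ (N - 1)) has_real_derivative g) (at r)
        \<and> g - lam ^ N * r ^ (N - 1) * f' (- u r) * phi r = mu / real N * phi r"
    and t: "t \<in> {0<..<1}"
  shows "\<exists>K>0. (wronskian N u u1 phi phi1 has_real_derivative phi t * K) (at t)"
proof -
  have C2u: "C2_on01 u u1"
    and deq: "((\<lambda>t. u1 t ^ N) has_real_derivative lam ^ N * real N * t ^ (N - 1) * f (- u t)) (at t)"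
    using sol t unfolding MO_solution_def by auto
  obtain g where "((\<lambda>t. - phi1 t * (u1 t) ^ (N - 1)) has_real_derivative g) (at t)"
      "g - lam ^ N * t ^ (N - 1) * f' (- u t) * phi t = mu / real N * phi t"
    using eig t by blast
  from wronskian_derivative[where f = f and f' = f' and lam = lam and mu = mu, OF N
      C2_on01_facts(3)[OF C2u t] C2_on01_facts(3)[OF C2phi t] deq this]
  show ?thesis
    using wronskian_factor_pos[OF fpos lam _ _ mu N, of t "- u t"] t negative by auto
qed

text \<open>At a zero of phi only the term phi1 u1^(N-1) (-u) of the Wronskian survives; with u < 0
  and u1 \<ge> 0 its sign is the sign of phi1, which is known at the ends of a nodal interval.\<close>

lemma wronskian_sign_at_zero:
  fixes N :: nat and u u1 phi phi1 :: "real \<Rightarrow> real" and sg t :: real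
  assumes "phi t = 0" "u t < 0" "u1 t ^ (N - 1) \<ge> 0"
  shows "sg * phi1 t \<ge> 0 \<Longrightarrow> sg * wronskian N u u1 phi phi1 t \<ge> 0"
    and "sg * phi1 t \<le> 0 \<Longrightarrow> sg * wronskian N u u1 phi phi1 t \<le> 0"
proof -
  have W: "sg * wronskian N u u1 phi phi1 t = sg * phi1 t * (u1 t ^ (N - 1) * (- u t))"
    using assms(1) by (simp add: wronskian_def)
  have nonneg: "u1 t ^ (N - 1) * (- u t) \<ge> 0" using assms(2,3) by (simp add: mult_nonneg_nonpos)
  show "sg * phi1 t \<ge> 0 \<Longrightarrow> sg * wronskian N u u1 phi phi1 t \<ge> 0"
    unfolding W using nonneg mult_nonneg_nonneg by blast
  show "sg * phi1 t \<le> 0 \<Longrightarrow> sg * wronskian N u u1 phi phi1 t \<le> 0"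
    unfolding W using nonneg mult_nonpos_nonneg by blast
qed

lemma eigenvalue_positive:
  fixes N :: nat and f f' :: "real \<Rightarrow> real" and lam mu :: real and u u1 :: "real \<Rightarrow> real"
  assumes N: "N \<ge> 1"
    and f1: "\<And>s. s \<noteq> 0 \<Longrightarrow> f s * s ^ N > 0"
    and fpos: "\<And>s. s > 0 \<Longrightarrow> f' s < real N * f s / s"
    and lam: "lam > 0"
    and sol: "MO_solution N lam f u u1"
    and negative: "\<forall>r\<in>{0..<1}. u r < 0"
    and ev: "lin_eigenvalue N lam f' u u1 mu"
  shows "mu > 0"
proof (rule ccontr)
  assume "\<not> mu > 0"
  then have mu: "mu \<le> 0" by simp
  have C2u: "C2_on01 u u1" and u1_0: "u1 0 = 0" and u_1: "u 1 = 0"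
    using sol unfolding MO_solution_def by auto
  obtain phi phi1 where C2phi: "C2_on01 phi phi1" and "\<exists>r\<in>{0..1}. phi r \<noteq> 0"
    and eig: "\<forall>r\<in>{0<..<1}. \<exists>g. ((\<lambda>t. - phi1 t * (u1 t) ^ (N - 1)) has_real_derivative g) (at r)
        \<and> g - lam ^ N * r ^ (N - 1) * f' (- u r) * phi r = mu / real N * phi r"
    and phi1_0: "phi1 0 = 0" and phi_1: "phi 1 = 0"
    using ev unfolding lin_eigenvalue_def by blast
  then obtain r0 where r0: "r0 \<in> {0..1}" "phi r0 \<noteq> 0" by blast
  note phi_cont = C2_on01_facts(1)[OF C2phi] and phi_deriv = C2_on01_facts(3)[OF C2phi]
  have u1_pow_nonneg: "u1 t ^ (N - 1) \<ge> 0" if "t \<in> {0..1}" for t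
    using negative_solution_increasing[OF N f1 lam sol negative, of t] that u1_0
    by (cases "t = 0") auto
  define W where "W = wronskian N u u1 phi phi1"
  have W_cont: "continuous_on {0..1} W"
    unfolding W_def wronskian_def[abs_def]
    using C2_on01_facts(1,2)[OF C2u] C2_on01_facts(1,2)[OF C2phi] by (intro continuous_intros) auto
  have W_deriv: "\<exists>K>0. (W has_real_derivative phi t * K) (at t)" if "t \<in> {0<..<1}" for t
    unfolding W_def by (rule wronskian_derivative_eigen[OF N fpos lam mu sol negative C2phi eig that])
  obtain a b where ab: "0 \<le> a" "a \<le> r0" "r0 < b" "b \<le> 1" "a = 0 \<or> phi a = 0" "phi b = 0"
    and sign: "\<And>t. a < t \<Longrightarrow> t < b \<Longrightarrow> sgn (phi r0) * phi t > 0"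
    using nodal_interval[OF phi_cont r0 phi_1] by blast
  define sg where "sg = sgn (phi r0)"
  have "sg * W a < sg * W b"
  proof (rule DERIV_pos_imp_increasing_open[where f = "\<lambda>t. sg * W t"])
    show "continuous_on {a..b} (\<lambda>t. sg * W t)"
      by (intro continuous_intros continuous_on_subset[OF W_cont]) (use ab in auto)
    show "\<exists>y. ((\<lambda>t. sg * W t) has_real_derivative y) (at t) \<and> y > 0" if t: "a < t" "t < b" for t
    proof -
      obtain K where "K > 0" "(W has_real_derivative phi t * K) (at t)"
        using W_deriv[of t] t ab by auto
      then show ?thesis
        using DERIV_cmult[where c = sg] sign[OF t] mult_pos_pos[of "sg * phi t" K]
        unfolding sg_def by (metis mult.assoc)
    qed
  qed (use ab in auto)
  moreover have "sg * W a \<ge> 0"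
  proof (cases "a = 0")
    case True
    then show ?thesis using phi1_0 u1_0 N by (simp add: W_def wronskian_def power_0_left)
  next
    case False
    then have a: "a \<in> {0<..<1}" "phi a = 0" using ab by auto
    have "sg * phi1 a \<ge> 0"
      by (rule deriv_nonneg_at_left_zero[where g = "\<lambda>t. sg * phi t" and a = a and b = b])
        (use DERIV_cmult[OF phi_deriv[OF a(1)]] a ab sign in \<open>auto simp: sg_def\<close>)
    then show ?thesis
      unfolding W_def using wronskian_sign_at_zero(1) a negative u1_pow_nonneg[of a] by simp
  qed
  moreover have "sg * W b \<le> 0"
  proof (cases "b = 1")
    case True
    then show ?thesis using phi_1 u_1 by (simp add: W_def wronskian_def)
  next
    case False
    then have b: "b \<in> {0<..<1}" using ab by auto
    have "sg * phi1 b \<le> 0"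
      by (rule deriv_nonpos_at_right_zero[where g = "\<lambda>t. sg * phi t" and a = a and b = b])
        (use DERIV_cmult[OF phi_deriv[OF b]] b ab sign in \<open>auto simp: sg_def\<close>)
    then show ?thesis
      unfolding W_def using wronskian_sign_at_zero(2) ab(6) b negative u1_pow_nonneg[of b] by simp
  qed
  ultimately show False by simp
qed

text \<open>Of the hypotheses on f only (f1) and the condition
  f'(s) < N f(s)/s for s > 0 enter, since -u takes only positive values in [0,1).\<close>

theorem lemma5p3:
  fixes N :: nat and f f' :: "real \<Rightarrow> real" and lam :: real and u u1 :: "real \<Rightarrow> real"
  assumes N: "N \<ge> 1"
    and f_C1: "\<And>s. (f has_real_derivative f' s) (at s)" "continuous_on UNIV f'"
    and f1: "\<And>s. s \<noteq> 0 \<Longrightarrow> f s * s ^ N > 0"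
    and f0: "\<exists>L>0. ((\<lambda>s. f s / s ^ N) \<longlongrightarrow> L) (at 0)"
    and finf: "((\<lambda>s. f s / s ^ N) \<longlongrightarrow> 0) at_infinity"
    and fpos: "\<And>s. s > 0 \<Longrightarrow> f' s < real N * f s / s"
    and fneg: "\<And>s. s < 0 \<Longrightarrow> f' s > real N * f s / s"
    and lam: "lam > 0"
    and sol: "MO_solution N lam f u u1"
    and negative: "\<forall>r\<in>{0..<1}. u r < 0"
  shows "stable_sol N lam f' u u1 \<and> \<not> degenerate_sol N lam f' u u1
         \<and> morse_index N lam f' u u1 = 0"
proof -
  have pos: "mu > 0" if "lin_eigenvalue N lam f' u u1 mu" for mu
    by (rule eigenvalue_positive[OF N f1 fpos lam sol negative that])
  then have no_negative: "{mu. lin_eigenvalue N lam f' u u1 mu \<and> mu < 0} = {}" by force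
  have "stable_sol N lam f' u u1" unfolding stable_sol_def using pos by blast
  moreover have "\<not> degenerate_sol N lam f' u u1" unfolding degenerate_sol_def using pos[of 0] by auto
  moreover have "morse_index N lam f' u u1 = 0" unfolding morse_index_def no_negative by simp
  ultimately show ?thesis by blast
qed

end
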